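(* Let $M$ be a $\pi$-projective right $R$-module. The following are equivalent: (a) $M$ is principally lifting; (b) $M$ is principally Goldie*-lifting; (c) $M$ is $\oplus$-principally supplemented.
   Context: $R$ is an associative ring with identity; modules are unital right $R$-modules. $M$ is $\pi$-projective if for all submodules $U,V$ with $U+V=M$ there exists $f\in\mathrm{End}(M)$ with $f(M)\subseteq U$ and $(1-f)(M)\subseteq V$. $K\ll N$ means $K$ is small in $N$. For submodules $X,Y$ of $M$, $X\,\beta^*\,Y$ means $(X+Y)/X\ll M/X$ and $(X+Y)/Y\ll M/Y$. $M$ is principally Goldie*-lifting if for every cyclic submodule $X$ there is a direct summand $D$ of $M$ with $X\,\beta^*\,D$. $M$ is principally lifting if for every cyclic submodule $X$ there is a decomposition $M=D\oplus D'$ with $D\subseteq X$ and $D'\cap X\ll M$. $M$ is $\oplus$-principally supplemented if for every cyclic submodule $X$ there is a direct summand $D$ of $M$ with $M=D+X$ and $D\cap X\ll D$. *)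

theory Defs
  imports "HOL-Algebra.Module"
begin

text \<open>Right modules over a (not necessarily commutative) ring R with identity.
  We reuse the record type of HOL-Algebra modules; the scalar action
  smult M r x is read as the RIGHT action x r.\<close>

definition right_module :: "('r, 'm) ring_scheme \<Rightarrow> ('r, 'a) module \<Rightarrow> bool" where
  "right_module R M \<longleftrightarrow> ring R \<and> abelian_group M \<and>
     (\<forall>r\<in>carrier R. \<forall>x\<in>carrier M. smult M r x \<in> carrier M) \<and>
     (\<forall>r\<in>carrier R. \<forall>x\<in>carrier M. \<forall>y\<in>carrier M.
         smult M r (x \<oplus>\<^bsub>M\<^esub> y) = smult M r x \<oplus>\<^bsub>M\<^esub> smult M r y) \<and>
     (\<forall>r\<in>carrier R. \<forall>s\<in>carrier R. \<forall>x\<in>carrier M.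
         smult M (r \<oplus>\<^bsub>R\<^esub> s) x = smult M r x \<oplus>\<^bsub>M\<^esub> smult M s x) \<and>
     (\<forall>r\<in>carrier R. \<forall>s\<in>carrier R. \<forall>x\<in>carrier M.
         smult M (r \<otimes>\<^bsub>R\<^esub> s) x = smult M s (smult M r x)) \<and>
     (\<forall>x\<in>carrier M. smult M \<one>\<^bsub>R\<^esub> x = x)"

definition submod :: "('r, 'm) ring_scheme \<Rightarrow> ('r, 'a) module \<Rightarrow> 'a set \<Rightarrow> bool" where
  "submod R M N \<longleftrightarrow> N \<subseteq> carrier M \<and> \<zero>\<^bsub>M\<^esub> \<in> N \<and>
     (\<forall>x\<in>N. \<forall>y\<in>N. x \<oplus>\<^bsub>M\<^esub> y \<in> N) \<and> (\<forall>x\<in>N. \<ominus>\<^bsub>M\<^esub> x \<in> N) \<and>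
     (\<forall>x\<in>N. \<forall>r\<in>carrier R. smult M r x \<in> N)"

definition msum :: "('r, 'a) module \<Rightarrow> 'a set \<Rightarrow> 'a set \<Rightarrow> 'a set" where
  "msum M X Y = {x \<oplus>\<^bsub>M\<^esub> y | x y. x \<in> X \<and> y \<in> Y}"

definition small_in :: "('r, 'm) ring_scheme \<Rightarrow> ('r, 'a) module \<Rightarrow> 'a set \<Rightarrow> 'a set \<Rightarrow> bool" where
  "small_in R M N K \<longleftrightarrow> submod R M K \<and> K \<subseteq> N \<and>
     (\<forall>L. submod R M L \<and> L \<subseteq> N \<and> msum M K L = N \<longrightarrow> L = N)"

definition cyclic_sub :: "('r, 'm) ring_scheme \<Rightarrow> ('r, 'a) module \<Rightarrow> 'a set \<Rightarrow> bool" where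
  "cyclic_sub R M X \<longleftrightarrow> (\<exists>m\<in>carrier M. X = {smult M r m | r. r \<in> carrier R})"

definition is_decomp :: "('r, 'm) ring_scheme \<Rightarrow> ('r, 'a) module \<Rightarrow> 'a set \<Rightarrow> 'a set \<Rightarrow> bool" where
  "is_decomp R M D D' \<longleftrightarrow> submod R M D \<and> submod R M D' \<and>
     msum M D D' = carrier M \<and> D \<inter> D' = {\<zero>\<^bsub>M\<^esub>}"

definition direct_summand :: "('r, 'm) ring_scheme \<Rightarrow> ('r, 'a) module \<Rightarrow> 'a set \<Rightarrow> bool" where
  "direct_summand R M D \<longleftrightarrow> (\<exists>D'. is_decomp R M D D')"

definition endo :: "('r, 'm) ring_scheme \<Rightarrow> ('r, 'a) module \<Rightarrow> ('a \<Rightarrow> 'a) \<Rightarrow> bool" where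
  "endo R M f \<longleftrightarrow> f \<in> carrier M \<rightarrow> carrier M \<and>
     (\<forall>x\<in>carrier M. \<forall>y\<in>carrier M. f (x \<oplus>\<^bsub>M\<^esub> y) = f x \<oplus>\<^bsub>M\<^esub> f y) \<and>
     (\<forall>r\<in>carrier R. \<forall>x\<in>carrier M. f (smult M r x) = smult M r (f x))"

definition pi_projective :: "('r, 'm) ring_scheme \<Rightarrow> ('r, 'a) module \<Rightarrow> bool" where
  "pi_projective R M \<longleftrightarrow> (\<forall>U V. submod R M U \<and> submod R M V \<and> msum M U V = carrier M \<longrightarrow>
     (\<exists>f. endo R M f \<and> f ` carrier M \<subseteq> U \<and> (\<forall>x\<in>carrier M. x \<ominus>\<^bsub>M\<^esub> f x \<in> V)))"

definition mcoset :: "('r, 'a) module \<Rightarrow> 'a set \<Rightarrow> 'a \<Rightarrow> 'a set" where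
  "mcoset M X x = {y \<oplus>\<^bsub>M\<^esub> x | y. y \<in> X}"

definition quot_mod :: "('r, 'a) module \<Rightarrow> 'a set \<Rightarrow> ('r, 'a set) module" where
  "quot_mod M X =
     \<lparr>carrier = mcoset M X ` carrier M,
      monoid.mult = (\<lambda>A B. undefined), one = undefined,
      zero = X,
      add = (\<lambda>A B. msum M A B),
      smult = (\<lambda>r A. msum M X ((\<lambda>a. smult M r a) ` A))\<rparr>"

definition quot_sub :: "('r, 'a) module \<Rightarrow> 'a set \<Rightarrow> 'a set \<Rightarrow> 'a set set" where
  "quot_sub M X K = mcoset M X ` K"

definition beta_star :: "('r, 'm) ring_scheme \<Rightarrow> ('r, 'a) module \<Rightarrow> 'a set \<Rightarrow> 'a set \<Rightarrow> bool" where
  "beta_star R M X Y \<longleftrightarrow>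
     small_in R (quot_mod M X) (carrier (quot_mod M X)) (quot_sub M X (msum M X Y)) \<and>
     small_in R (quot_mod M Y) (carrier (quot_mod M Y)) (quot_sub M Y (msum M X Y))"

definition principally_goldie_star_lifting :: "('r, 'm) ring_scheme \<Rightarrow> ('r, 'a) module \<Rightarrow> bool" where
  "principally_goldie_star_lifting R M \<longleftrightarrow>
     (\<forall>X. cyclic_sub R M X \<longrightarrow> (\<exists>D. direct_summand R M D \<and> beta_star R M X D))"

definition principally_lifting :: "('r, 'm) ring_scheme \<Rightarrow> ('r, 'a) module \<Rightarrow> bool" where
  "principally_lifting R M \<longleftrightarrow>
     (\<forall>X. cyclic_sub R M X \<longrightarrow>
        (\<exists>D D'. is_decomp R M D D' \<and> D \<subseteq> X \<and> small_in R M (carrier M) (D' \<inter> X)))"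

definition oplus_principally_supplemented :: "('r, 'm) ring_scheme \<Rightarrow> ('r, 'a) module \<Rightarrow> bool" where
  "oplus_principally_supplemented R M \<longleftrightarrow>
     (\<forall>X. cyclic_sub R M X \<longrightarrow>
        (\<exists>D. direct_summand R M D \<and> msum M D X = carrier M \<and> small_in R M D (D \<inter> X)))"

end

theory Submission
  imports Defs
begin

(* With them, the three implications of the theorem become statements about a
   single decomposition M = D (+) D' and an arbitrary submodule X:
     (a => b) if D <= X and D' n X << M, then X beta* D;
     (b => c) if X beta* D, then M = D' + X and D' n X << D';
     (c => a) in a pi-projective module, a summand D with M = D + X has a
              complement E contained in X, and smallness in D lifts to M. *)

locale rmod =
  fixes R :: "('r, 'm) ring_scheme" and M :: "('r, 'a) module" (structure)
  assumes right_module: "right_module R M"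
begin

sublocale abelian_group M
  using right_module unfolding right_module_def by blast

lemma ring_R: "ring R"
  using right_module unfolding right_module_def by blast

lemma smult_closed: "r \<in> carrier R \<Longrightarrow> x \<in> carrier M \<Longrightarrow> smult M r x \<in> carrier M"
  using right_module unfolding right_module_def by blast

lemma smult_add: "r \<in> carrier R \<Longrightarrow> x \<in> carrier M \<Longrightarrow> y \<in> carrier M \<Longrightarrow>
    smult M r (x \<oplus> y) = smult M r x \<oplus> smult M r y"
  using right_module unfolding right_module_def by blast

lemma smult_add_scalar: "r \<in> carrier R \<Longrightarrow> s \<in> carrier R \<Longrightarrow> x \<in> carrier M \<Longrightarrow>
    smult M (r \<oplus>\<^bsub>R\<^esub> s) x = smult M r x \<oplus> smult M s x"
  using right_module unfolding right_module_def by blast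

lemma smult_mult_scalar: "r \<in> carrier R \<Longrightarrow> s \<in> carrier R \<Longrightarrow> x \<in> carrier M \<Longrightarrow>
    smult M (r \<otimes>\<^bsub>R\<^esub> s) x = smult M s (smult M r x)"
  using right_module unfolding right_module_def by blast

lemma smult_zero_scalar: "x \<in> carrier M \<Longrightarrow> smult M \<zero>\<^bsub>R\<^esub> x = \<zero>"
proof -
  assume x: "x \<in> carrier M"
  interpret R: ring R by (rule ring_R)
  have "smult M \<zero>\<^bsub>R\<^esub> x = smult M \<zero>\<^bsub>R\<^esub> x \<oplus> smult M \<zero>\<^bsub>R\<^esub> x"
    using smult_add_scalar[of "\<zero>\<^bsub>R\<^esub>" "\<zero>\<^bsub>R\<^esub>" x] x by simp
  thus ?thesis using x smult_closed[of "\<zero>\<^bsub>R\<^esub>" x]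
    by (metis R.zero_closed add.l_cancel_one' zero_closed)
qed

lemma neg_zero [simp]: "\<ominus> \<zero> = \<zero>"
  using r_neg[of \<zero>] by simp

lemma minus_telescope:
  "x \<in> carrier M \<Longrightarrow> y \<in> carrier M \<Longrightarrow> z \<in> carrier M \<Longrightarrow> (z \<ominus> x) \<oplus> (x \<ominus> y) = z \<ominus> y"
  by (simp add: minus_eq a_assoc r_neg1)

lemma minus_swap: "x \<in> carrier M \<Longrightarrow> y \<in> carrier M \<Longrightarrow> \<ominus> (x \<ominus> y) = y \<ominus> x"
  by (simp add: minus_eq minus_add minus_minus a_comm)

lemma add_minus_cancel: "x \<in> carrier M \<Longrightarrow> y \<in> carrier M \<Longrightarrow> (x \<oplus> y) \<ominus> y = x"
  by (simp add: minus_eq a_assoc r_neg)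

lemma minus_add_cancel: "x \<in> carrier M \<Longrightarrow> y \<in> carrier M \<Longrightarrow> (x \<ominus> y) \<oplus> y = x"
  by (simp add: minus_eq a_assoc l_neg)


lemma submodD:
  assumes "submod R M N"
  shows "N \<subseteq> carrier M" "\<zero> \<in> N" "x \<in> N \<Longrightarrow> y \<in> N \<Longrightarrow> x \<oplus> y \<in> N"
    "x \<in> N \<Longrightarrow> \<ominus> x \<in> N" "x \<in> N \<Longrightarrow> r \<in> carrier R \<Longrightarrow> smult M r x \<in> N"
  using assms unfolding submod_def by blast+

lemma submod_minus: "submod R M N \<Longrightarrow> x \<in> N \<Longrightarrow> y \<in> N \<Longrightarrow> x \<ominus> y \<in> N"
  by (simp add: minus_eq submodD)

lemma submod_Int: "submod R M A \<Longrightarrow> submod R M B \<Longrightarrow> submod R M (A \<inter> B)"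
  unfolding submod_def by blast

lemma cyclic_submod:
  assumes "cyclic_sub R M X"
  shows "submod R M X"
proof -
  interpret R: ring R by (rule ring_R)
  obtain m where m: "m \<in> carrier M" and X: "X = {smult M r m | r. r \<in> carrier R}"
    using assms unfolding cyclic_sub_def by blast
  show ?thesis unfolding submod_def X
  proof (intro conjI ballI allI impI)
    show "{smult M r m |r. r \<in> carrier R} \<subseteq> carrier M" using smult_closed m by blast
    show "\<zero> \<in> {smult M r m |r. r \<in> carrier R}"
      using smult_zero_scalar[OF m] R.zero_closed by (metis (mono_tags, lifting) mem_Collect_eq)
  next
    fix x y assume "x \<in> {smult M r m |r. r \<in> carrier R}" "y \<in> {smult M r m |r. r \<in> carrier R}"
    then obtain r s where "r \<in> carrier R" "s \<in> carrier R" "x = smult M r m" "y = smult M s m"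
      by blast
    thus "x \<oplus> y \<in> {smult M r m |r. r \<in> carrier R}"
      using smult_add_scalar[of r s m] m by (metis (mono_tags, lifting) R.add.m_closed mem_Collect_eq)
  next
    fix x assume "x \<in> {smult M r m |r. r \<in> carrier R}"
    then obtain r where r: "r \<in> carrier R" "x = smult M r m" by blast
    have "smult M (\<ominus>\<^bsub>R\<^esub> r) m \<oplus> x = \<zero>"
      using smult_add_scalar[of "\<ominus>\<^bsub>R\<^esub> r" r m] r m smult_zero_scalar[OF m] by (simp add: R.l_neg)
    hence "\<ominus> x = smult M (\<ominus>\<^bsub>R\<^esub> r) m"
      using r m smult_closed by (metis R.a_inv_closed minus_equality)
    thus "\<ominus> x \<in> {smult M r m |r. r \<in> carrier R}" using r by blast
  next
    fix x r assume "x \<in> {smult M r m |r. r \<in> carrier R}" "r \<in> carrier R"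
    then obtain s where "s \<in> carrier R" "x = smult M s m" by blast
    thus "smult M r x \<in> {smult M r m |r. r \<in> carrier R}"
      using smult_mult_scalar[of s r m] m \<open>r \<in> carrier R\<close>
      by (metis (mono_tags, lifting) R.m_closed mem_Collect_eq)
  qed
qed

lemma submod_msum:
  assumes A: "submod R M A" and B: "submod R M B"
  shows "submod R M (msum M A B)"
  unfolding submod_def
proof (intro conjI ballI allI impI)
  note a = submodD[OF A] and b = submodD[OF B]
  show "msum M A B \<subseteq> carrier M" using a b unfolding msum_def by blast
  have "\<zero> = \<zero> \<oplus> \<zero>" by simp
  thus "\<zero> \<in> msum M A B" using a(2) b(2) unfolding msum_def by blast
next
  note a = submodD[OF A] and b = submodD[OF B]
  fix x y assume "x \<in> msum M A B" "y \<in> msum M A B"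
  then obtain a1 b1 a2 b2 where h: "a1 \<in> A" "b1 \<in> B" "a2 \<in> A" "b2 \<in> B"
    "x = a1 \<oplus> b1" "y = a2 \<oplus> b2" unfolding msum_def by blast
  have "a1 \<in> carrier M" "b1 \<in> carrier M" "a2 \<in> carrier M" "b2 \<in> carrier M"
    using h a(1) b(1) by auto
  hence "x \<oplus> y = (a1 \<oplus> a2) \<oplus> (b1 \<oplus> b2)" using h(5,6) by (simp add: a_ac)
  thus "x \<oplus> y \<in> msum M A B" using a(3) b(3) h unfolding msum_def by blast
next
  note a = submodD[OF A] and b = submodD[OF B]
  fix x assume "x \<in> msum M A B"
  then obtain a1 b1 where h: "a1 \<in> A" "b1 \<in> B" "x = a1 \<oplus> b1" unfolding msum_def by blast
  have "a1 \<in> carrier M" "b1 \<in> carrier M" using h a(1) b(1) by auto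
  hence "\<ominus> x = \<ominus> a1 \<oplus> \<ominus> b1" using h(3) by (simp add: minus_add)
  thus "\<ominus> x \<in> msum M A B" using a(4) b(4) h unfolding msum_def by blast
next
  note a = submodD[OF A] and b = submodD[OF B]
  fix x r assume "x \<in> msum M A B" "r \<in> carrier R"
  then obtain a1 b1 where h: "a1 \<in> A" "b1 \<in> B" "x = a1 \<oplus> b1" unfolding msum_def by blast
  have "a1 \<in> carrier M" "b1 \<in> carrier M" using h a(1) b(1) by auto
  hence "smult M r x = smult M r a1 \<oplus> smult M r b1"
    using smult_add h(3) \<open>r \<in> carrier R\<close> by simp
  thus "smult M r x \<in> msum M A B" using a(5) b(5) h \<open>r \<in> carrier R\<close> unfolding msum_def by blast
qed

lemma msum_sub: "submod R M A \<Longrightarrow> submod R M B \<Longrightarrow> msum M A B \<subseteq> carrier M"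
  using submod_msum submodD(1) by blast

lemma msum_comm: "A \<subseteq> carrier M \<Longrightarrow> B \<subseteq> carrier M \<Longrightarrow> msum M A B = msum M B A"
  unfolding msum_def by (auto, (metis a_comm subsetD)+)

lemma msum_absorb:
  assumes X: "submod R M X" and D: "submod R M D" and "D \<subseteq> X"
  shows "msum M X D = X"
proof
  show "msum M X D \<subseteq> X" unfolding msum_def using assms submodD(3)[OF X] by blast
  show "X \<subseteq> msum M X D"
  proof
    fix x assume "x \<in> X"
    hence "x = x \<oplus> \<zero>" using submodD(1)[OF X] by auto
    thus "x \<in> msum M X D" unfolding msum_def using \<open>x \<in> X\<close> submodD(2)[OF D] by blast
  qed
qed

lemma msum_right:
  assumes "submod R M A" "b \<in> B" "b \<in> carrier M"
  shows "b \<in> msum M A B"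
proof -
  have "b = \<zero> \<oplus> b" using assms(3) by simp
  thus ?thesis unfolding msum_def using assms(2) submodD(2)[OF assms(1)] by blast
qed

lemma decomp_sym: "is_decomp R M D D' \<Longrightarrow> is_decomp R M D' D"
  unfolding is_decomp_def using msum_comm submodD(1) by (metis inf_commute)

lemma decomp_split:
  assumes "is_decomp R M D D'" "m \<in> carrier M"
  obtains d d' where "d \<in> D" "d' \<in> D'" "m = d \<oplus> d'"
  using assms unfolding is_decomp_def msum_def by blast

lemma decomp_zero: "is_decomp R M D D' \<Longrightarrow> x \<in> D \<Longrightarrow> x \<in> D' \<Longrightarrow> x = \<zero>"
  unfolding is_decomp_def by blast


lemma coset_char:
  assumes X: "submod R M X" and y: "y \<in> carrier M"
  shows "mcoset M X y = {z \<in> carrier M. z \<ominus> y \<in> X}"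
proof
  show "mcoset M X y \<subseteq> {z \<in> carrier M. z \<ominus> y \<in> X}"
    using submodD(1)[OF X] y add_minus_cancel unfolding mcoset_def by auto
  show "{z \<in> carrier M. z \<ominus> y \<in> X} \<subseteq> mcoset M X y"
  proof
    fix z assume "z \<in> {z \<in> carrier M. z \<ominus> y \<in> X}"
    hence "z \<in> carrier M" "z \<ominus> y \<in> X" by auto
    moreover have "z = (z \<ominus> y) \<oplus> y" using minus_add_cancel y calculation by simp
    ultimately show "z \<in> mcoset M X y" unfolding mcoset_def by blast
  qed
qed

lemma coset_mem: "submod R M X \<Longrightarrow> y \<in> carrier M \<Longrightarrow> y \<in> mcoset M X y"
  by (simp add: coset_char r_neg minus_eq submodD(2))

lemma coset_eq:
  assumes X: "submod R M X" and x: "x \<in> carrier M" and y: "y \<in> carrier M"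
  shows "mcoset M X x = mcoset M X y \<longleftrightarrow> x \<ominus> y \<in> X"
proof
  assume "mcoset M X x = mcoset M X y"
  hence "x \<in> mcoset M X y" using coset_mem[OF X x] by simp
  thus "x \<ominus> y \<in> X" using coset_char[OF X y] by simp
next
  assume h: "x \<ominus> y \<in> X"
  have h2: "y \<ominus> x \<in> X" using submodD(4)[OF X h] minus_swap x y by simp
  show "mcoset M X x = mcoset M X y"
    unfolding coset_char[OF X x] coset_char[OF X y]
  proof (intro Collect_cong conj_cong refl iffI)
    fix z assume "z \<in> carrier M" "z \<ominus> x \<in> X"
    thus "z \<ominus> y \<in> X" using submodD(3)[OF X _ h] minus_telescope x y by metis
  next
    fix z assume "z \<in> carrier M" "z \<ominus> y \<in> X"
    thus "z \<ominus> x \<in> X" using submodD(3)[OF X _ h2] minus_telescope x y by metis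
  qed
qed

lemma coset_zero: "submod R M X \<Longrightarrow> mcoset M X \<zero> = X"
  using coset_char[of X \<zero>] submodD(1)[of X] by (auto simp: minus_eq subsetD)

lemma coset_of_member:
  assumes X: "submod R M X" and x: "x \<in> X"
  shows "mcoset M X x = X"
proof -
  have xc: "x \<in> carrier M" using x submodD(1)[OF X] by blast
  have "x \<ominus> \<zero> \<in> X" using x xc by (simp add: minus_eq)
  thus ?thesis using coset_eq[OF X xc zero_closed] coset_zero[OF X] by simp
qed

lemma coset_add:
  assumes X: "submod R M X" and x: "x \<in> carrier M" and y: "y \<in> carrier M"
  shows "msum M (mcoset M X x) (mcoset M X y) = mcoset M X (x \<oplus> y)"
proof
  note xc = submodD(1)[OF X]
  show "msum M (mcoset M X x) (mcoset M X y) \<subseteq> mcoset M X (x \<oplus> y)"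
  proof
    fix z assume "z \<in> msum M (mcoset M X x) (mcoset M X y)"
    then obtain a b where "a \<in> X" "b \<in> X" "z = (a \<oplus> x) \<oplus> (b \<oplus> y)"
      unfolding msum_def mcoset_def by blast
    moreover have "(a \<oplus> x) \<oplus> (b \<oplus> y) = (a \<oplus> b) \<oplus> (x \<oplus> y)"
      using calculation xc x y by (simp add: a_ac subsetD)
    ultimately show "z \<in> mcoset M X (x \<oplus> y)"
      unfolding mcoset_def using submodD(3)[OF X] by blast
  qed
  show "mcoset M X (x \<oplus> y) \<subseteq> msum M (mcoset M X x) (mcoset M X y)"
  proof
    fix z assume "z \<in> mcoset M X (x \<oplus> y)"
    then obtain a where a: "a \<in> X" "z = a \<oplus> (x \<oplus> y)" unfolding mcoset_def by blast
    have "z = (a \<oplus> x) \<oplus> (\<zero> \<oplus> y)" using a xc x y by (simp add: a_ac subsetD)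
    moreover have "a \<oplus> x \<in> mcoset M X x" "\<zero> \<oplus> y \<in> mcoset M X y"
      unfolding mcoset_def using a submodD(2)[OF X] by blast+
    ultimately show "z \<in> msum M (mcoset M X x) (mcoset M X y)" unfolding msum_def by blast
  qed
qed

lemma quot_simps:
  "carrier (quot_mod M X) = mcoset M X ` carrier M"
  "zero (quot_mod M X) = X"
  "add (quot_mod M X) = msum M"
  "smult (quot_mod M X) = (\<lambda>r A. msum M X ((\<lambda>a. smult M r a) ` A))"
  unfolding quot_mod_def by simp_all

lemma quot_msum: "msum (quot_mod M X) A B = {msum M a b | a b. a \<in> A \<and> b \<in> B}"
  unfolding msum_def quot_simps by simp

lemma coset_smult:
  assumes X: "submod R M X" and x: "x \<in> carrier M" and r: "r \<in> carrier R"
  shows "smult (quot_mod M X) r (mcoset M X x) = mcoset M X (smult M r x)"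
proof
  note xc = submodD(1)[OF X]
  show "smult (quot_mod M X) r (mcoset M X x) \<subseteq> mcoset M X (smult M r x)"
  proof
    fix z assume "z \<in> smult (quot_mod M X) r (mcoset M X x)"
    then obtain a b where ab: "a \<in> X" "b \<in> X" "z = a \<oplus> smult M r (b \<oplus> x)"
      unfolding quot_simps msum_def mcoset_def by blast
    have "a \<in> carrier M" "b \<in> carrier M" using ab xc by auto
    hence "z = (a \<oplus> smult M r b) \<oplus> smult M r x"
      using ab x r smult_add smult_closed by (simp add: a_assoc)
    moreover have "a \<oplus> smult M r b \<in> X" using ab r submodD[OF X] by blast
    ultimately show "z \<in> mcoset M X (smult M r x)" unfolding mcoset_def by blast
  qed
  show "mcoset M X (smult M r x) \<subseteq> smult (quot_mod M X) r (mcoset M X x)"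
  proof
    fix z assume "z \<in> mcoset M X (smult M r x)"
    then obtain a where a: "a \<in> X" "z = a \<oplus> smult M r x" unfolding mcoset_def by blast
    thus "z \<in> smult (quot_mod M X) r (mcoset M X x)"
      unfolding quot_simps msum_def using coset_mem[OF X x] by blast
  qed
qed

lemma coset_inv:
  assumes X: "submod R M X" and x: "x \<in> carrier M"
  shows "a_inv (quot_mod M X) (mcoset M X x) = mcoset M X (\<ominus> x)"
proof -
  have "(THE Y. Y \<in> mcoset M X ` carrier M \<and> msum M (mcoset M X x) Y = X
      \<and> msum M Y (mcoset M X x) = X) = mcoset M X (\<ominus> x)"
  proof (rule the_equality)
    have "msum M (mcoset M X x) (mcoset M X (\<ominus> x)) = X"
      using coset_add[OF X x] x coset_zero[OF X] by (simp add: r_neg)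
    moreover have "msum M (mcoset M X (\<ominus> x)) (mcoset M X x) = X"
      using coset_add[OF X _ x] x coset_zero[OF X] by (simp add: l_neg)
    ultimately show "mcoset M X (\<ominus> x) \<in> mcoset M X ` carrier M
      \<and> msum M (mcoset M X x) (mcoset M X (\<ominus> x)) = X
      \<and> msum M (mcoset M X (\<ominus> x)) (mcoset M X x) = X"
      using x by simp
  next
    fix Y assume "Y \<in> mcoset M X ` carrier M \<and> msum M (mcoset M X x) Y = X
      \<and> msum M Y (mcoset M X x) = X"
    then obtain y where y: "y \<in> carrier M" "Y = mcoset M X y"
        "msum M (mcoset M X x) (mcoset M X y) = X"
      by auto
    hence "mcoset M X (x \<oplus> y) = mcoset M X \<zero>" using coset_add[OF X x] coset_zero[OF X] by simp
    hence "x \<oplus> y \<in> X" using coset_eq[OF X] x y by (simp add: minus_eq)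
    moreover have "y \<ominus> (\<ominus> x) = x \<oplus> y" using x y by (simp add: minus_eq minus_minus a_comm)
    ultimately show "Y = mcoset M X (\<ominus> x)" using coset_eq[OF X] x y by simp
  qed
  thus ?thesis by (simp add: a_inv_def m_inv_def quot_simps)
qed

lemma quot_submod:
  assumes X: "submod R M X" and S: "submod R M S"
  shows "submod R (quot_mod M X) (mcoset M X ` S)"
  unfolding submod_def
proof (intro conjI ballI)
  note s = submodD[OF S]
  show "mcoset M X ` S \<subseteq> carrier (quot_mod M X)" using s(1) by (auto simp: quot_simps)
  show "\<zero>\<^bsub>quot_mod M X\<^esub> \<in> mcoset M X ` S"
    using s(2) coset_zero[OF X] by (auto simp: quot_simps)
next
  note s = submodD[OF S]
  fix A B assume "A \<in> mcoset M X ` S" "B \<in> mcoset M X ` S"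
  then obtain a b where "a \<in> S" "b \<in> S" "A = mcoset M X a" "B = mcoset M X b" by blast
  moreover have "a \<in> carrier M" "b \<in> carrier M" using calculation s(1) by auto
  ultimately show "A \<oplus>\<^bsub>quot_mod M X\<^esub> B \<in> mcoset M X ` S"
    using coset_add[OF X] s by (auto simp: quot_simps)
next
  note s = submodD[OF S]
  fix A assume "A \<in> mcoset M X ` S"
  then obtain a where "a \<in> S" "A = mcoset M X a" by blast
  thus "\<ominus>\<^bsub>quot_mod M X\<^esub> A \<in> mcoset M X ` S" using coset_inv[OF X] s by auto
next
  note s = submodD[OF S]
  fix A r assume "A \<in> mcoset M X ` S" "r \<in> carrier R"
  then obtain a where "a \<in> S" "A = mcoset M X a" by blast
  thus "smult (quot_mod M X) r A \<in> mcoset M X ` S"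
    using coset_smult[OF X] s \<open>r \<in> carrier R\<close> by auto
qed

lemma quot_preimage_submod:
  assumes X: "submod R M X" and Lq: "submod R (quot_mod M X) Lq"
  shows "submod R M {m \<in> carrier M. mcoset M X m \<in> Lq}"
    and "X \<subseteq> {m \<in> carrier M. mcoset M X m \<in> Lq}"
proof -
  have lq: "X \<in> Lq" "\<And>A B. A \<in> Lq \<Longrightarrow> B \<in> Lq \<Longrightarrow> msum M A B \<in> Lq"
    "\<And>A. A \<in> Lq \<Longrightarrow> a_inv (quot_mod M X) A \<in> Lq"
    "\<And>A r. A \<in> Lq \<Longrightarrow> r \<in> carrier R \<Longrightarrow> smult (quot_mod M X) r A \<in> Lq"
    using Lq unfolding submod_def quot_simps by auto
  show "X \<subseteq> {m \<in> carrier M. mcoset M X m \<in> Lq}"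
    using coset_of_member[OF X] lq(1) submodD(1)[OF X] by auto
  show "submod R M {m \<in> carrier M. mcoset M X m \<in> Lq}"
    unfolding submod_def
  proof (intro conjI ballI)
    show "{m \<in> carrier M. mcoset M X m \<in> Lq} \<subseteq> carrier M" by blast
    show "\<zero> \<in> {m \<in> carrier M. mcoset M X m \<in> Lq}" using coset_zero[OF X] lq(1) by simp
  next
    fix x y assume "x \<in> {m \<in> carrier M. mcoset M X m \<in> Lq}" "y \<in> {m \<in> carrier M. mcoset M X m \<in> Lq}"
    thus "x \<oplus> y \<in> {m \<in> carrier M. mcoset M X m \<in> Lq}"
      using coset_add[OF X, of x y] lq(2) by fastforce
  next
    fix x assume "x \<in> {m \<in> carrier M. mcoset M X m \<in> Lq}"
    thus "\<ominus> x \<in> {m \<in> carrier M. mcoset M X m \<in> Lq}"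
      using coset_inv[OF X, of x] lq(3) by fastforce
  next
    fix x r assume "x \<in> {m \<in> carrier M. mcoset M X m \<in> Lq}" "r \<in> carrier R"
    thus "smult M r x \<in> {m \<in> carrier M. mcoset M X m \<in> Lq}"
      using coset_smult[OF X, of x r] lq(4) smult_closed by fastforce
  qed
qed


lemma quot_small_supplement:
  assumes X: "submod R M X" and K: "submod R M K" and L: "submod R M L"
    and KL: "msum M K L = carrier M"
    and small: "small_in R (quot_mod M X) (carrier (quot_mod M X)) (mcoset M X ` K)"
  shows "msum M L X = carrier M"
proof -
  have KLq: "msum (quot_mod M X) (mcoset M X ` K) (mcoset M X ` L) = carrier (quot_mod M X)"
  proof
    show "msum (quot_mod M X) (mcoset M X ` K) (mcoset M X ` L) \<subseteq> carrier (quot_mod M X)"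
    proof
      fix C assume "C \<in> msum (quot_mod M X) (mcoset M X ` K) (mcoset M X ` L)"
      then obtain k l where kl: "k \<in> K" "l \<in> L" "C = msum M (mcoset M X k) (mcoset M X l)"
        unfolding quot_msum by blast
      have "k \<in> carrier M" "l \<in> carrier M" using kl submodD(1)[OF K] submodD(1)[OF L] by auto
      thus "C \<in> carrier (quot_mod M X)" using coset_add[OF X] kl(3) by (simp add: quot_simps)
    qed
    show "carrier (quot_mod M X) \<subseteq> msum (quot_mod M X) (mcoset M X ` K) (mcoset M X ` L)"
    proof
      fix C assume "C \<in> carrier (quot_mod M X)"
      then obtain m where m: "m \<in> carrier M" "C = mcoset M X m" by (auto simp: quot_simps)
      then obtain k l where kl: "k \<in> K" "l \<in> L" "m = k \<oplus> l"
        using KL unfolding msum_def by blast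
      have "C = msum M (mcoset M X k) (mcoset M X l)"
        using coset_add[OF X] kl m submodD(1)[OF K] submodD(1)[OF L] by auto
      thus "C \<in> msum (quot_mod M X) (mcoset M X ` K) (mcoset M X ` L)"
        unfolding quot_msum using kl by blast
    qed
  qed
  moreover have "mcoset M X ` L \<subseteq> carrier (quot_mod M X)"
    using submodD(1)[OF L] by (auto simp: quot_simps)
  ultimately have Lq_full: "mcoset M X ` L = carrier (quot_mod M X)"
    using small quot_submod[OF X L] unfolding small_in_def by blast
  show ?thesis
  proof
    show "msum M L X \<subseteq> carrier M" by (rule msum_sub[OF L X])
    show "carrier M \<subseteq> msum M L X"
    proof
      fix m assume m: "m \<in> carrier M"
      hence "mcoset M X m \<in> mcoset M X ` L" using Lq_full by (simp add: quot_simps)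
      then obtain l where l: "l \<in> L" "mcoset M X m = mcoset M X l" by auto
      have lc: "l \<in> carrier M" using l submodD(1)[OF L] by blast
      have "m \<ominus> l \<in> X" using coset_eq[OF X m lc] l by simp
      moreover have "m = l \<oplus> (m \<ominus> l)" using minus_add_cancel[OF m lc] m lc by (simp add: a_comm)
      ultimately show "m \<in> msum M L X" unfolding msum_def using l by blast
    qed
  qed
qed

text \<open>Second: K/X is small in M/X as soon as every submodule L containing X with
  K + L = M is all of M (the preimage of a supplement in M/X is such an L).\<close>

lemma quot_small_intro:
  assumes X: "submod R M X" and K: "submod R M K"
    and only_M: "\<And>L. submod R M L \<Longrightarrow> X \<subseteq> L \<Longrightarrow> msum M K L = carrier M \<Longrightarrow> L = carrier M"
  shows "small_in R (quot_mod M X) (carrier (quot_mod M X)) (mcoset M X ` K)"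
  unfolding small_in_def
proof (intro conjI allI impI)
  show "submod R (quot_mod M X) (mcoset M X ` K)" by (rule quot_submod[OF X K])
  show "mcoset M X ` K \<subseteq> carrier (quot_mod M X)"
    using submodD(1)[OF K] by (auto simp: quot_simps)
  fix Lq assume h: "submod R (quot_mod M X) Lq \<and> Lq \<subseteq> carrier (quot_mod M X)
      \<and> msum (quot_mod M X) (mcoset M X ` K) Lq = carrier (quot_mod M X)"
  define L where "L = {m \<in> carrier M. mcoset M X m \<in> Lq}"
  have Ls: "submod R M L" and XL: "X \<subseteq> L"
    unfolding L_def using quot_preimage_submod[OF X] h by blast+
  have "msum M K L = carrier M"
  proof
    show "msum M K L \<subseteq> carrier M" by (rule msum_sub[OF K Ls])
    show "carrier M \<subseteq> msum M K L"
    proof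
      fix m assume m: "m \<in> carrier M"
      hence "mcoset M X m \<in> msum (quot_mod M X) (mcoset M X ` K) Lq"
        using h by (simp add: quot_simps)
      then obtain k C where kC: "k \<in> K" "C \<in> Lq" "mcoset M X m = msum M (mcoset M X k) C"
        unfolding quot_msum by blast
      then obtain l where l: "l \<in> carrier M" "C = mcoset M X l" using h by (auto simp: quot_simps)
      have kc: "k \<in> carrier M" using kC submodD(1)[OF K] by blast
      define e where "e = m \<ominus> (k \<oplus> l)"
      have ec: "e \<in> carrier M" unfolding e_def using m kc l by simp
      have "mcoset M X m = mcoset M X (k \<oplus> l)" using kC l coset_add[OF X kc l(1)] by simp
      hence "e \<in> X" unfolding e_def using coset_eq[OF X m] kc l by simp
      hence "e \<oplus> l \<in> L" using XL kC l submodD(3)[OF Ls] unfolding L_def by blast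
      moreover have "m = k \<oplus> (e \<oplus> l)"
      proof -
        have "m = e \<oplus> (k \<oplus> l)" unfolding e_def using minus_add_cancel m kc l by simp
        thus ?thesis using ec kc l by (simp add: a_ac)
      qed
      ultimately show "m \<in> msum M K L" unfolding msum_def using kC by blast
    qed
  qed
  hence "L = carrier M" using only_M Ls XL by blast
  thus "Lq = carrier (quot_mod M X)" using h unfolding L_def by (auto simp: quot_simps)
qed


lemma small_in_carrier:
  assumes D: "submod R M D" and K: "small_in R M D K"
  shows "small_in R M (carrier M) K"
  unfolding small_in_def
proof (intro conjI allI impI)
  have Ks: "submod R M K" "K \<subseteq> D" using K unfolding small_in_def by auto
  show "submod R M K" by (fact Ks(1))
  show "K \<subseteq> carrier M" using Ks submodD(1)[OF D] by auto
  fix L assume h: "submod R M L \<and> L \<subseteq> carrier M \<and> msum M K L = carrier M"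
  have "msum M K (D \<inter> L) = D" \<comment> \<open>modular law, using K \<subseteq> D\<close>
  proof
    show "msum M K (D \<inter> L) \<subseteq> D" unfolding msum_def using Ks submodD(3)[OF D] by blast
    show "D \<subseteq> msum M K (D \<inter> L)"
    proof
      fix d assume d: "d \<in> D"
      hence "d \<in> msum M K L" using h submodD(1)[OF D] by auto
      then obtain k l where kl: "k \<in> K" "l \<in> L" "d = k \<oplus> l" unfolding msum_def by blast
      have "k \<in> carrier M" "l \<in> carrier M" using kl Ks submodD(1)[OF D] h by auto
      hence "l = \<ominus> k \<oplus> d" using kl(3) by (simp add: r_neg1)
      hence "l \<in> D" using d kl Ks submodD[OF D] by blast
      thus "d \<in> msum M K (D \<inter> L)" using kl unfolding msum_def by blast
    qed
  qed
  hence "D \<inter> L = D" using K submod_Int[OF D] h unfolding small_in_def by blast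
  hence DL: "D \<subseteq> L" by blast
  show "L = carrier M"
  proof
    show "L \<subseteq> carrier M" using h by blast
    show "carrier M \<subseteq> L"
    proof
      fix m assume "m \<in> carrier M"
      then obtain k l where "k \<in> K" "l \<in> L" "m = k \<oplus> l" using h unfolding msum_def by blast
      thus "m \<in> L" using DL Ks submodD(3) h by blast
    qed
  qed
qed

lemma endo_zero:
  assumes "endo R M f"
  shows "f \<zero> = \<zero>"
proof -
  have c: "f \<zero> \<in> carrier M" using assms unfolding endo_def by auto
  have "f \<zero> = f \<zero> \<oplus> f \<zero>" using assms unfolding endo_def by (metis zero_closed l_zero)
  thus ?thesis using c by (metis add.l_cancel_one')
qed

lemma endo_image:
  assumes f: "endo R M f" and S: "submod R M S"
  shows "submod R M (f ` S)"
  unfolding submod_def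
proof (intro conjI ballI)
  note s = submodD[OF S]
  have fc: "\<And>x. x \<in> carrier M \<Longrightarrow> f x \<in> carrier M"
    and fa: "\<And>x y. x \<in> carrier M \<Longrightarrow> y \<in> carrier M \<Longrightarrow> f (x \<oplus> y) = f x \<oplus> f y"
    using f unfolding endo_def by auto
  show "f ` S \<subseteq> carrier M" using s(1) fc by auto
  show "\<zero> \<in> f ` S" using s(2) endo_zero[OF f] by (metis image_eqI)
  {
    fix x y assume "x \<in> f ` S" "y \<in> f ` S"
    then obtain a b where ab: "a \<in> S" "b \<in> S" "x = f a" "y = f b" by blast
    have "a \<in> carrier M" "b \<in> carrier M" using ab s(1) by auto
    hence "x \<oplus> y = f (a \<oplus> b)" using fa[of a b] ab by simp
    thus "x \<oplus> y \<in> f ` S" using s(3) ab by blast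
  }
  {
    fix x assume "x \<in> f ` S"
    then obtain a where a: "a \<in> S" "x = f a" by blast
    have ac: "a \<in> carrier M" using a s(1) by auto
    have "f (\<ominus> a) \<oplus> f a = \<zero>" using fa[of "\<ominus> a" a] ac endo_zero[OF f] by (simp add: l_neg)
    hence "\<ominus> x = f (\<ominus> a)" using a ac fc by (metis a_inv_closed minus_equality)
    thus "\<ominus> x \<in> f ` S" using s(4) a by blast
  }
  {
    fix x r assume "x \<in> f ` S" "r \<in> carrier R"
    then obtain a where a: "a \<in> S" "x = f a" by blast
    hence "smult M r x = f (smult M r a)" using f s(1) \<open>r \<in> carrier R\<close> unfolding endo_def by auto
    thus "smult M r x \<in> f ` S" using s(5) a \<open>r \<in> carrier R\<close> by blast
  }
qed

text \<open>With f : M \<rightarrow> X and 1 - f : M \<rightarrow> D from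
  pi-projectivity, E is the image f(D'') of any complement D'' of D.\<close>

lemma pi_projective_complement_inside:
  assumes pp: "pi_projective R M" and X: "submod R M X"
    and dec: "is_decomp R M D D''" and DX: "msum M D X = carrier M"
  shows "\<exists>E. is_decomp R M E D \<and> E \<subseteq> X"
proof -
  have Ds: "submod R M D" and D''s: "submod R M D''" using dec unfolding is_decomp_def by auto
  have dc: "D \<subseteq> carrier M" "D'' \<subseteq> carrier M" using Ds D''s submodD(1) by auto
  have "msum M X D = carrier M" using DX msum_comm dc submodD(1)[OF X] by metis
  then obtain f where f: "endo R M f" and fX: "f ` carrier M \<subseteq> X"
    and fD: "\<forall>x\<in>carrier M. x \<ominus> f x \<in> D"
    using pp X Ds unfolding pi_projective_def by blast
  have fc: "\<And>x. x \<in> carrier M \<Longrightarrow> f x \<in> carrier M" using f unfolding endo_def by auto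
  define E where "E = f ` D''"
  have Es: "submod R M E" unfolding E_def by (rule endo_image[OF f D''s])
  have "msum M E D = carrier M"
  proof
    show "msum M E D \<subseteq> carrier M" by (rule msum_sub[OF Es Ds])
    show "carrier M \<subseteq> msum M E D"
    proof
      fix m assume "m \<in> carrier M"
      then obtain d d' where dd: "d \<in> D" "d' \<in> D''" "m = d \<oplus> d'" using decomp_split[OF dec] by blast
      have cc: "d \<in> carrier M" "d' \<in> carrier M" "f d' \<in> carrier M" using dd dc fc by auto
      have "m = f d' \<oplus> (d \<oplus> (d' \<ominus> f d'))"
        using cc dd(3) by (simp add: minus_eq a_ac l_neg r_neg)
      moreover have "d \<oplus> (d' \<ominus> f d') \<in> D" using fD cc dd submodD(3)[OF Ds] by blast
      moreover have "f d' \<in> E" unfolding E_def using dd by blast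
      ultimately show "m \<in> msum M E D" unfolding msum_def by blast
    qed
  qed
  moreover have "E \<inter> D = {\<zero>}"
  proof
    show "{\<zero>} \<subseteq> E \<inter> D" using submodD(2)[OF Es] submodD(2)[OF Ds] by blast
    show "E \<inter> D \<subseteq> {\<zero>}"
    proof
      fix y assume "y \<in> E \<inter> D"
      then obtain d' where d': "d' \<in> D''" "y = f d'" "f d' \<in> D" unfolding E_def by blast
      have cc: "d' \<in> carrier M" "f d' \<in> carrier M" using d' dc fc by auto
      have "d' = (d' \<ominus> f d') \<oplus> f d'" using minus_add_cancel cc by simp
      hence "d' \<in> D" using fD cc d' submodD(3)[OF Ds] by metis
      hence "d' = \<zero>" using decomp_zero[OF dec] d' by blast
      thus "y \<in> {\<zero>}" using d' endo_zero[OF f] by simp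
    qed
  qed
  ultimately have "is_decomp R M E D" unfolding is_decomp_def using Es Ds by blast
  moreover have "E \<subseteq> X" unfolding E_def using fX dc by blast
  ultimately show ?thesis by blast
qed


text \<open>Here X + D = X, so X/X is trivially small, and a submodule
  L \<supseteq> D with X + L = M satisfies (D' \<inter> X) + L = M, forcing L = M.\<close>

lemma beta_star_of_summand_inside:
  assumes X: "submod R M X" and dec: "is_decomp R M D D'" and DX: "D \<subseteq> X"
    and small: "small_in R M (carrier M) (D' \<inter> X)"
  shows "beta_star R M X D"
proof -
  have Ds: "submod R M D" and D's: "submod R M D'" using dec unfolding is_decomp_def by auto
  have XD: "msum M X D = X" by (rule msum_absorb[OF X Ds DX])
  have "small_in R (quot_mod M X) (carrier (quot_mod M X)) (mcoset M X ` X)"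
  proof (rule quot_small_intro[OF X X])
    fix L assume L: "submod R M L" "X \<subseteq> L" "msum M X L = carrier M"
    show "L = carrier M"
    proof
      show "L \<subseteq> carrier M" by (rule submodD(1)[OF L(1)])
      show "carrier M \<subseteq> L"
      proof
        fix m assume "m \<in> carrier M"
        then obtain x l where "x \<in> X" "l \<in> L" "m = x \<oplus> l" using L(3) unfolding msum_def by blast
        thus "m \<in> L" using L(2) submodD(3)[OF L(1)] by blast
      qed
    qed
  qed
  moreover have "small_in R (quot_mod M D) (carrier (quot_mod M D)) (mcoset M D ` X)"
  proof (rule quot_small_intro[OF Ds X])
    fix L assume L: "submod R M L" "D \<subseteq> L" "msum M X L = carrier M"
    have "msum M (D' \<inter> X) L = carrier M"
    proof
      show "msum M (D' \<inter> X) L \<subseteq> carrier M" by (rule msum_sub[OF submod_Int[OF D's X] L(1)])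
      show "carrier M \<subseteq> msum M (D' \<inter> X) L"
      proof
        fix m assume "m \<in> carrier M"
        then obtain x l where xl: "x \<in> X" "l \<in> L" "m = x \<oplus> l" using L(3) unfolding msum_def by blast
        have xc: "x \<in> carrier M" using xl submodD(1)[OF X] by blast
        then obtain d k where dk: "d \<in> D" "k \<in> D'" "x = d \<oplus> k" using decomp_split[OF dec] by blast
        have cc: "d \<in> carrier M" "k \<in> carrier M" "l \<in> carrier M"
          using dk xl submodD(1)[OF Ds] submodD(1)[OF D's] submodD(1)[OF L(1)] by auto
        have "k = x \<ominus> d" using dk(3) cc add_minus_cancel[OF cc(2,1)] by (simp add: a_comm)
        hence "k \<in> X" using submod_minus[OF X] xl dk DX by blast
        moreover have "m = k \<oplus> (d \<oplus> l)" using xl(3) dk(3) cc by (simp add: a_ac)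
        moreover have "d \<oplus> l \<in> L" using dk xl L(2) submodD(3)[OF L(1)] by blast
        ultimately show "m \<in> msum M (D' \<inter> X) L" unfolding msum_def using dk by blast
      qed
    qed
    thus "L = carrier M" using small L(1) submodD(1)[OF L(1)] unfolding small_in_def by blast
  qed
  ultimately show ?thesis unfolding beta_star_def quot_sub_def XD by blast
qed

lemma complement_supplement_of_beta_star:
  assumes X: "submod R M X" and dec: "is_decomp R M D D'" and bs: "beta_star R M X D"
  shows "msum M D' X = carrier M" and "small_in R M D' (D' \<inter> X)"
proof -
  have Ds: "submod R M D" and D's: "submod R M D'" using dec unfolding is_decomp_def by auto
  have dc: "D \<subseteq> carrier M" "D' \<subseteq> carrier M" "X \<subseteq> carrier M"
    using Ds D's X submodD(1) by auto
  have XDs: "submod R M (msum M X D)" by (rule submod_msum[OF X Ds])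
  have smallX: "small_in R (quot_mod M X) (carrier (quot_mod M X)) (mcoset M X ` msum M X D)"
   and smallD: "small_in R (quot_mod M D) (carrier (quot_mod M D)) (mcoset M D ` msum M X D)"
    using bs unfolding beta_star_def quot_sub_def by auto
  have "msum M (msum M X D) D' = carrier M"
  proof
    show "msum M (msum M X D) D' \<subseteq> carrier M" by (rule msum_sub[OF XDs D's])
    show "carrier M \<subseteq> msum M (msum M X D) D'"
    proof
      fix m assume "m \<in> carrier M"
      then obtain d d' where dd: "d \<in> D" "d' \<in> D'" "m = d \<oplus> d'" using decomp_split[OF dec] by blast
      have "d \<in> msum M X D" using msum_right[OF X dd(1)] dd(1) dc by blast
      thus "m \<in> msum M (msum M X D) D'" using dd unfolding msum_def[of M "msum M X D" D'] by blast
    qed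
  qed
  thus "msum M D' X = carrier M" by (rule quot_small_supplement[OF X XDs D's _ smallX])
  show "small_in R M D' (D' \<inter> X)"
    unfolding small_in_def
  proof (intro conjI allI impI)
    show "submod R M (D' \<inter> X)" by (rule submod_Int[OF D's X])
    show "D' \<inter> X \<subseteq> D'" by blast
    fix N assume h: "submod R M N \<and> N \<subseteq> D' \<and> msum M (D' \<inter> X) N = D'"
    have Ns: "submod R M N" using h by blast
    have "msum M (msum M X D) N = carrier M"
    proof
      show "msum M (msum M X D) N \<subseteq> carrier M" by (rule msum_sub[OF XDs Ns])
      show "carrier M \<subseteq> msum M (msum M X D) N"
      proof
        fix m assume "m \<in> carrier M"
        then obtain d d' where dd: "d \<in> D" "d' \<in> D'" "m = d \<oplus> d'" using decomp_split[OF dec] by blast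
        then obtain k n where kn: "k \<in> D' \<inter> X" "n \<in> N" "d' = k \<oplus> n"
          using h unfolding msum_def by blast
        have cc: "d \<in> carrier M" "k \<in> carrier M" "n \<in> carrier M" using dd kn dc h by auto
        have "m = (k \<oplus> d) \<oplus> n" using cc dd(3) kn(3) by (simp add: a_ac)
        moreover have "k \<oplus> d \<in> msum M X D" unfolding msum_def using kn dd by blast
        ultimately show "m \<in> msum M (msum M X D) N" unfolding msum_def using kn by blast
      qed
    qed
    hence ND: "msum M N D = carrier M" by (rule quot_small_supplement[OF Ds XDs Ns _ smallD])
    show "N = D'"
    proof
      show "N \<subseteq> D'" using h by blast
      show "D' \<subseteq> N"
      proof
        fix d' assume d': "d' \<in> D'"
        hence "d' \<in> msum M N D" using ND dc by blast
        then obtain n d where nd: "n \<in> N" "d \<in> D" "d' = n \<oplus> d" unfolding msum_def by blast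
        have cc: "n \<in> carrier M" "d \<in> carrier M" using nd h dc by auto
        have "d = d' \<ominus> n" using nd(3) cc add_minus_cancel[OF cc(2,1)] by (simp add: a_comm)
        hence "d \<in> D'" using submod_minus[OF D's d'] nd h by blast
        hence "d = \<zero>" using decomp_zero[OF dec nd(2)] by blast
        thus "d' \<in> N" using nd cc by simp
      qed
    qed
  qed
qed

lemma lifting_imp_goldie_star_lifting:
  assumes "principally_lifting R M"
  shows "principally_goldie_star_lifting R M"
  unfolding principally_goldie_star_lifting_def
proof (intro allI impI)
  fix X assume "cyclic_sub R M X"
  then obtain D D' where "is_decomp R M D D'" "D \<subseteq> X" "small_in R M (carrier M) (D' \<inter> X)"
    using assms unfolding principally_lifting_def by blast
  thus "\<exists>D. direct_summand R M D \<and> beta_star R M X D"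
    using beta_star_of_summand_inside cyclic_submod[OF \<open>cyclic_sub R M X\<close>]
    unfolding direct_summand_def by blast
qed

lemma goldie_star_lifting_imp_supplemented:
  assumes "principally_goldie_star_lifting R M"
  shows "oplus_principally_supplemented R M"
  unfolding oplus_principally_supplemented_def
proof (intro allI impI)
  fix X assume "cyclic_sub R M X"
  then obtain D D' where dec: "is_decomp R M D D'" and "beta_star R M X D"
    using assms unfolding principally_goldie_star_lifting_def direct_summand_def by blast
  hence "msum M D' X = carrier M" "small_in R M D' (D' \<inter> X)"
    using complement_supplement_of_beta_star cyclic_submod[OF \<open>cyclic_sub R M X\<close>] by blast+
  moreover have "direct_summand R M D'" unfolding direct_summand_def using decomp_sym[OF dec] by blast
  ultimately show "\<exists>D. direct_summand R M D \<and> msum M D X = carrier M \<and> small_in R M D (D \<inter> X)"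
    by blast
qed

lemma supplemented_imp_lifting:
  assumes pp: "pi_projective R M" and c: "oplus_principally_supplemented R M"
  shows "principally_lifting R M"
  unfolding principally_lifting_def
proof (intro allI impI)
  fix X assume "cyclic_sub R M X"
  hence X: "submod R M X" by (rule cyclic_submod)
  obtain D D'' where dec: "is_decomp R M D D''" and DX: "msum M D X = carrier M"
    and small: "small_in R M D (D \<inter> X)"
    using c \<open>cyclic_sub R M X\<close> unfolding oplus_principally_supplemented_def direct_summand_def
    by blast
  obtain E where "is_decomp R M E D" "E \<subseteq> X"
    using pi_projective_complement_inside[OF pp X dec DX] by blast
  moreover have "small_in R M (carrier M) (D \<inter> X)"
    using small_in_carrier dec small unfolding is_decomp_def by blast
  ultimately show "\<exists>D D'. is_decomp R M D D' \<and> D \<subseteq> X \<and> small_in R M (carrier M) (D' \<inter> X)"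
    by blast
qed

end

theorem proposition3p16:
  fixes R :: "('r, 'm) ring_scheme" and M :: "('r, 'a) module"
  assumes "right_module R M" and "pi_projective R M"
  shows "(principally_lifting R M \<longleftrightarrow> principally_goldie_star_lifting R M) \<and>
         (principally_goldie_star_lifting R M \<longleftrightarrow> oplus_principally_supplemented R M)"
proof -
  interpret rmod R M by (rule rmod.intro) (rule assms(1))
  have "principally_lifting R M \<Longrightarrow> principally_goldie_star_lifting R M"
    by (rule lifting_imp_goldie_star_lifting)
  moreover have "principally_goldie_star_lifting R M \<Longrightarrow> oplus_principally_supplemented R M"
    by (rule goldie_star_lifting_imp_supplemented)
  moreover have "oplus_principally_supplemented R M \<Longrightarrow> principally_lifting R M"
    by (rule supplemented_imp_lifting[OF assms(2)])
  ultimately show ?thesis by blast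
qed

end
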